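(* Fix a history $h_t$ and let $(\hat{Y}_t, O, Z)$ be jointly distributed given $h_t$, with $\hat Y_t\in\mathcal V$ (finite), $O\in\{0,1\}$, $Z$ in a countable set. Assume (outcome-sufficiency) $Z$ is conditionally independent of $\hat{Y}_t$ given $(O, h_t)$, and let $z$ be a feedback value that is positively informative for success: $q_1(z,h_t) > q_0(z,h_t)$. Then for any two candidates $\hat{y}_t, \hat{y}'_t\in\mathcal V$ with positive probability given $h_t$ and with $p(\hat y_t;h_t),p(\hat y'_t;h_t)>0$, \[ r_t^{\mathrm{cf}}(\hat{y}_t; h_t) \ge r_t^{\mathrm{cf}}(\hat{y}'_t; h_t) \iff r_t^{z}(\hat{y}_t; h_t) \ge r_t^{z}(\hat{y}'_t; h_t). \]
   Context: Notation: $p(\hat{y}_t; h_t) := P(O = 1 \mid \hat{Y}_t = \hat{y}_t, h_t)$; $q_b(z, h_t) := P(Z = z \mid O = b, h_t)$ for $b\in\{0,1\}$ (assume $P(O=b\mid h_t)>0$). Interventional credit (in identified form): $r_t^{\mathrm{cf}}(\hat{y}_t; h_t) := \log P(O=1 \mid \hat{Y}_t=\hat{y}_t, h_t) - \log P(O=1\mid h_t)$; this equals the interventional quantity $\log P(O=1\mid \mathrm{do}(\hat Y_t=\hat y_t),h_t) - \log P(O=1\mid h_t)$ under consistency, sequential ignorability and positivity. Feedback-conditioned reward: $r_t^{z}(\hat{y}_t; h_t) := \log P(Z=z \mid \hat{Y}_t=\hat{y}_t, h_t) - \log P(Z=z\mid h_t)$ (which coincides with the self-distillation reward under posterior compatibility).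 Assume $P(Z=z\mid h_t)>0$ and $P(O=1\mid h_t)>0$. *)

theory Defs
  imports "HOL-Probability.Probability"
begin

text \<open>The history h_t is fixed; D is the joint distribution of (Y_t, O, Z) given h_t,
  as a discrete distribution on triples (y, o, z), with O = 1 encoded as True.\<close>

definition Pr :: "('v \<times> bool \<times> 'z) pmf \<Rightarrow> ('v \<times> bool \<times> 'z \<Rightarrow> bool) \<Rightarrow> real" where
  "Pr D E = measure_pmf.prob D {w. E w}"

definition cPr :: "('v \<times> bool \<times> 'z) pmf \<Rightarrow> ('v \<times> bool \<times> 'z \<Rightarrow> bool)
    \<Rightarrow> ('v \<times> bool \<times> 'z \<Rightarrow> bool) \<Rightarrow> real" where
  "cPr D E F = Pr D (\<lambda>w. E w \<and> F w) / Pr D F"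

definition outcome_sufficient :: "('v \<times> bool \<times> 'z) pmf \<Rightarrow> bool" where
  "outcome_sufficient D \<longleftrightarrow> (\<forall>y b z.
     Pr D (\<lambda>(y',ob,z'). y' = y \<and> ob = b \<and> z' = z) * Pr D (\<lambda>(_,ob,_). ob = b)
     = Pr D (\<lambda>(y',ob,_). y' = y \<and> ob = b) * Pr D (\<lambda>(_,ob,z'). ob = b \<and> z' = z))"

definition p_succ :: "('v \<times> bool \<times> 'z) pmf \<Rightarrow> 'v \<Rightarrow> real" where
  "p_succ D y = cPr D (\<lambda>(_,ob,_). ob) (\<lambda>(y',_,_). y' = y)"

definition q :: "('v \<times> bool \<times> 'z) pmf \<Rightarrow> bool \<Rightarrow> 'z \<Rightarrow> real" where
  "q D b z = cPr D (\<lambda>(_,_,z'). z' = z) (\<lambda>(_,ob,_). ob = b)"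

definition r_cf :: "('v \<times> bool \<times> 'z) pmf \<Rightarrow> 'v \<Rightarrow> real" where
  "r_cf D y = ln (p_succ D y) - ln (Pr D (\<lambda>(_,ob,_). ob))"

definition r_z :: "('v \<times> bool \<times> 'z) pmf \<Rightarrow> 'z \<Rightarrow> 'v \<Rightarrow> real" where
  "r_z D z y = ln (cPr D (\<lambda>(_,_,z'). z' = z) (\<lambda>(y',_,_). y' = y))
             - ln (Pr D (\<lambda>(_,_,z'). z' = z))"

end

theory Submission
  imports Defs
begin

text \<open>Under outcome sufficiency, Z depends on the candidate only through O, so
  P(Z = z | Y = y) = p(y) q_1(z) + (1 - p(y)) q_0(z) is an affine function of p(y)
  with slope q_1(z) - q_0(z) > 0. Both rewards are logarithms of increasing functions of
  p(y), shifted by a term not depending on y, so they order candidates identically.\<close>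

lemma Pr_cong: "(\<And>w. E w = F w) \<Longrightarrow> Pr D E = Pr D F"
  by (simp add: Pr_def)

lemma Pr_nonneg: "0 \<le> Pr D E"
  by (simp add: Pr_def)

lemma Pr_split: "Pr D E = Pr D (\<lambda>w. E w \<and> P w) + Pr D (\<lambda>w. E w \<and> \<not> P w)"
proof -
  have "{w. E w} = {w. E w \<and> P w} \<union> {w. E w \<and> \<not> P w}" by auto
  moreover have "measure_pmf.prob D ({w. E w \<and> P w} \<union> {w. E w \<and> \<not> P w})
      = measure_pmf.prob D {w. E w \<and> P w} + measure_pmf.prob D {w. E w \<and> \<not> P w}"
    by (rule measure_pmf.finite_measure_Union) auto
  ultimately show ?thesis unfolding Pr_def by simp
qed

lemma outcome_sufficient_joint:
  assumes "outcome_sufficient D" and "Pr D (\<lambda>(_,ob,_). ob = b) > 0"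
  shows "Pr D (\<lambda>(v,ob,z'). v = y \<and> ob = b \<and> z' = z)
       = Pr D (\<lambda>(v,ob,_). v = y \<and> ob = b) * q D b z"
proof -
  let ?O = "Pr D (\<lambda>(_,ob,_). ob = b)"
  have "q D b z = Pr D (\<lambda>(_,ob,z'). ob = b \<and> z' = z) / ?O"
    unfolding q_def cPr_def by (rule arg_cong2[where f = "(/)"]; rule Pr_cong; auto)
  moreover have "Pr D (\<lambda>(v,ob,z'). v = y \<and> ob = b \<and> z' = z) * ?O
      = Pr D (\<lambda>(v,ob,_). v = y \<and> ob = b) * Pr D (\<lambda>(_,ob,z'). ob = b \<and> z' = z)"
    using assms(1) unfolding outcome_sufficient_def by blast
  moreover have "\<And>c m a j r :: real. c * m = a * j \<Longrightarrow> r = j / m \<Longrightarrow> 0 < m \<Longrightarrow> c = a * r"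
    by (simp add: field_simps) (metis mult.assoc mult.commute mult_right_cancel less_irrefl)
  ultimately show ?thesis
    using assms(2) by blast
qed

lemma cPr_feedback_given_candidate:
  assumes suff: "outcome_sufficient D"
    and O1: "Pr D (\<lambda>(_,ob,_). ob) > 0" and O0: "Pr D (\<lambda>(_,ob,_). \<not> ob) > 0"
    and Y: "Pr D (\<lambda>(v,_,_). v = y) > 0"
  shows "cPr D (\<lambda>(_,_,z'). z' = z) (\<lambda>(y',_,_). y' = y)
       = p_succ D y * q D True z + (1 - p_succ D y) * q D False z"
proof -
  define A where "A b = Pr D (\<lambda>(v,ob,_). v = y \<and> ob = b)" for b
  define PY where "PY = Pr D (\<lambda>(v,_,_). v = y)"
  have "Pr D (\<lambda>(_,ob,_). ob = b) > 0" for b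
    using O1 O0 by (cases b) (simp_all add: case_prod_beta')
  then have joint: "Pr D (\<lambda>(v,ob,z'). v = y \<and> ob = b \<and> z' = z) = A b * q D b z" for b
    unfolding A_def using outcome_sufficient_joint[OF suff] by blast
  have "Pr D (\<lambda>w. (case w of (_,_,z') \<Rightarrow> z' = z) \<and> (case w of (y',_,_) \<Rightarrow> y' = y))
      = Pr D (\<lambda>(v,ob,z'). v = y \<and> ob = True \<and> z' = z)
      + Pr D (\<lambda>(v,ob,z'). v = y \<and> ob = False \<and> z' = z)"
    by (subst Pr_split[where P = "\<lambda>(_,ob,_). ob"], rule arg_cong2[where f = "(+)"];
        rule Pr_cong; auto)
  then have ZY: "cPr D (\<lambda>(_,_,z'). z' = z) (\<lambda>(y',_,_). y' = y)
      = (A True * q D True z + A False * q D False z) / PY"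
    unfolding cPr_def PY_def joint by (simp add: case_prod_beta')
  have PY_split: "PY = A True + A False"
    unfolding PY_def A_def
    by (subst Pr_split[where P = "\<lambda>(_,ob,_). ob"], rule arg_cong2[where f = "(+)"];
        rule Pr_cong; auto)
  have p: "p_succ D y = A True / PY"
    unfolding p_succ_def cPr_def PY_def A_def
    by (rule arg_cong2[where f = "(/)"]; rule Pr_cong; auto)
  have "1 - A True / PY = A False / PY"
    using Y PY_split by (simp add: PY_def field_simps)
  then show ?thesis
    unfolding ZY p by (simp add: add_divide_distrib)
qed

lemma mixture_pos:
  fixes a b p :: real
  assumes "0 \<le> b" and "b < a" and "0 < p"
  shows "0 < p * a + (1 - p) * b"
proof -
  have "p * a + (1 - p) * b = b + p * (a - b)" by (simp add: algebra_simps)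
  with assms show ?thesis by (smt (verit) mult_pos_pos)
qed

lemma mixture_le_mixture_iff:
  fixes a b p p' :: real
  assumes "b < a"
  shows "p' * a + (1 - p') * b \<le> p * a + (1 - p) * b \<longleftrightarrow> p' \<le> p"
proof -
  have "p * a + (1 - p) * b - (p' * a + (1 - p') * b) = (p - p') * (a - b)"
    by (simp add: algebra_simps)
  with assms show ?thesis by (smt (verit) zero_le_mult_iff)
qed

theorem proposition2:
  fixes D :: "('v \<times> bool \<times> 'z::countable) pmf" and V :: "'v set"
    and z :: 'z and y y' :: 'v
  assumes "finite V"
    and "\<forall>w \<in> set_pmf D. fst w \<in> V"
    and "Pr D (\<lambda>(_,ob,_). ob) > 0"
    and "Pr D (\<lambda>(_,ob,_). \<not> ob) > 0"
    and "Pr D (\<lambda>(_,_,z'). z' = z) > 0"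
    and "outcome_sufficient D"
    and "q D True z > q D False z"
    and "y \<in> V" and "y' \<in> V"
    and "Pr D (\<lambda>(v,_,_). v = y) > 0" and "Pr D (\<lambda>(v,_,_). v = y') > 0"
    and "p_succ D y > 0" and "p_succ D y' > 0"
  shows "r_cf D y \<ge> r_cf D y' \<longleftrightarrow> r_z D z y \<ge> r_z D z y'"
proof -
  have q0: "0 \<le> q D False z"
    unfolding q_def cPr_def by (simp add: Pr_nonneg)
  have "r_cf D y \<ge> r_cf D y' \<longleftrightarrow> p_succ D y \<ge> p_succ D y'"
    unfolding r_cf_def using assms(12,13) by simp
  also have "\<dots> \<longleftrightarrow> p_succ D y' * q D True z + (1 - p_succ D y') * q D False z
                   \<le> p_succ D y * q D True z + (1 - p_succ D y) * q D False z"
    using assms(7) by (simp add: mixture_le_mixture_iff)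
  also have "\<dots> \<longleftrightarrow> r_z D z y \<ge> r_z D z y'"
    unfolding r_z_def cPr_feedback_given_candidate[OF assms(6,3,4,10)]
      cPr_feedback_given_candidate[OF assms(6,3,4,11)]
    using mixture_pos[OF q0 assms(7)] assms(12,13) by simp
  finally show ?thesis .
qed

end
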